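(* Let $\alpha\in\mathbb{R}\setminus\pi\mathbb{Z}$, put $a=\cot\alpha$ and $w=a+i$ (so $\bar w=a-i$). For $n\ge 1$ let $C_n=aJ_n+B_n\in M_n(\mathbb{C})$, i.e. the matrix with all diagonal entries $a$, all entries above the diagonal $a+i$ and all entries below the diagonal $a-i$. Let $\chi_n(\alpha;\lambda)=\det(\lambda I_n-C_n)$ and $\chi_0(\alpha;\lambda)=1$. Then for $n\ge 2$ $$\chi_n(\alpha;\lambda)=(2\lambda-2a+w+\bar w)\,\chi_{n-1}(\alpha;\lambda)-(\lambda-a+w)(\lambda-a+\bar w)\,\chi_{n-2}(\alpha;\lambda),$$ and for $n\ge 1$ and real $\lambda$ $$\chi_n(\alpha;\lambda)=\frac{(\cot\alpha+i)(\lambda-i)^n-(\cot\alpha-i)(\lambda+i)^n}{2i}=\operatorname{Im}\big((\cot\alpha+i)(\lambda-i)^n\big).$$ The eigenvalues of $C_n$ are $\lambda_k=\cot\frac{\alpha+k\pi}{n}$, $0\le k\le n-1$; that is, $\chi_n(\alpha;\lambda)=\prod_{k=0}^{n-1}\big(\lambda-\cot\frac{\alpha+k\pi}{n}\big)$.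
   Context: $J_n$ denotes the $n\times n$ matrix all of whose entries equal $1$. $B_n=i\,M$ where $M$ is the $n\times n$ matrix with zero diagonal, all entries above the diagonal equal to $1$ and all entries below the diagonal equal to $-1$. *)

theory Defs
  imports Complex_Main "Jordan_Normal_Form.Determinant"
begin

definition J_mat :: "nat \<Rightarrow> complex mat" where
  "J_mat n = mat n n (\<lambda>(i,j). 1)"

definition B_mat :: "nat \<Rightarrow> complex mat" where
  "B_mat n = \<i> \<cdot>\<^sub>m mat n n (\<lambda>(i,j). if i = j then 0 else if i < j then 1 else -1)"

definition C_mat :: "real \<Rightarrow> nat \<Rightarrow> complex mat" where
  "C_mat \<alpha> n = complex_of_real (cot \<alpha>) \<cdot>\<^sub>m J_mat n + B_mat n"

definition chi :: "real \<Rightarrow> nat \<Rightarrow> complex \<Rightarrow> complex" where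
  "chi \<alpha> n x = (if n = 0 then 1 else det (x \<cdot>\<^sub>m 1\<^sub>m n - C_mat \<alpha> n))"

end

theory Submission imports Defs "HOL-Computational_Algebra.Polynomial" begin

text \<open>
  The matrix \<open>\<lambda>I - C\<^sub>n\<close> has constant diagonal \<open>d = \<lambda> - a\<close>, constant upper part \<open>u = -w\<close> and
  constant lower part \<open>l = -cnj w\<close>. Adding \<open>t\<close> to all entries changes its determinant affinely
  in \<open>t\<close>, since after subtracting from each row the next one only the last row depends
  on \<open>t\<close>. Taking \<open>t = -u\<close> and \<open>t = -l\<close> gives triangular matrices with determinant
  \<open>(d - u)\<^sup>n\<close> and \<open>(d - l)\<^sup>n\<close>; eliminating the slope yields
  \<open>\<chi>\<^sub>n(\<lambda>) = ((a + \<i>)(\<lambda> - \<i>)\<^sup>n - (a - \<i>)(\<lambda> + \<i>)\<^sup>n) / 2\<i>\<close>, from which the recurrence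
  and the imaginary-part form are immediate. Writing \<open>cot t \<plusminus> \<i> = cis (\<plusminus>t) / sin t\<close> shows
  that the \<open>n\<close> distinct numbers \<open>cot ((\<alpha> + k\<pi>) / n)\<close> are roots of this monic polynomial of
  degree \<open>n\<close>, so it is their product.
\<close>

definition diag_upper_lower_mat :: "nat \<Rightarrow> 'a \<Rightarrow> 'a \<Rightarrow> 'a \<Rightarrow> 'a mat" where
  "diag_upper_lower_mat n d u l = mat n n (\<lambda>(i,j). if i = j then d else if i < j then u else l)"

lemma diag_upper_lower_mat_carrier [simp]: "diag_upper_lower_mat n d u l \<in> carrier_mat n n"
  by (simp add: diag_upper_lower_mat_def)

lemma diag_mat_diag_upper_lower_mat: "diag_mat (diag_upper_lower_mat n d u l) = replicate n d"
  by (simp add: diag_mat_def diag_upper_lower_mat_def list_eq_iff_nth_eq)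

lemma det_diag_upper_lower_mat_lower_triangular:
  "det (diag_upper_lower_mat n d 0 l) = (d :: 'a :: comm_ring_1) ^ n"
  by (subst det_lower_triangular[of n])
     (auto simp: diag_mat_diag_upper_lower_mat, simp add: diag_upper_lower_mat_def)

lemma det_diag_upper_lower_mat_upper_triangular:
  "det (diag_upper_lower_mat n d u 0) = (d :: 'a :: comm_ring_1) ^ n"
  by (subst det_upper_triangular[of _ n])
     (auto simp: upper_triangular_def diag_mat_diag_upper_lower_mat,
      simp add: diag_upper_lower_mat_def)

lemma det_add_smult_row_supported:
  fixes A B :: "'a :: comm_ring_1 mat"
  assumes A: "A \<in> carrier_mat n n" and B: "B \<in> carrier_mat n n" and k: "k < n"
    and B_zero: "\<And>i j. i < n \<Longrightarrow> j < n \<Longrightarrow> i \<noteq> k \<Longrightarrow> B $$ (i,j) = 0"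
  shows "det (A + t \<cdot>\<^sub>m B) = det A + t * (\<Sum>j<n. B $$ (k,j) * cofactor A k j)"
proof -
  have AB: "A + t \<cdot>\<^sub>m B \<in> carrier_mat n n" using A B by simp
  have cofactor_eq: "cofactor (A + t \<cdot>\<^sub>m B) k j = cofactor A k j" for j
  proof -
    have "mat_delete (A + t \<cdot>\<^sub>m B) k j = mat_delete A k j"
      using A B B_zero by (intro eq_matI) (auto simp: mat_delete_def)
    thus ?thesis by (simp add: cofactor_def)
  qed
  have "det (A + t \<cdot>\<^sub>m B) = (\<Sum>j<n. (A + t \<cdot>\<^sub>m B) $$ (k,j) * cofactor A k j)"
    using laplace_expansion_row[OF AB k] by (simp add: cofactor_eq)
  also have "\<dots> = (\<Sum>j<n. A $$ (k,j) * cofactor A k j) + t * (\<Sum>j<n. B $$ (k,j) * cofactor A k j)"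
    using A B k by (simp add: distrib_right sum.distrib sum_distrib_left mult.assoc)
  also have "(\<Sum>j<n. A $$ (k,j) * cofactor A k j) = det A"
    by (rule laplace_expansion_row[OF A k, symmetric])
  finally show ?thesis .
qed

lemma det_add_smult_all_ones_affine:
  fixes A :: "'a :: comm_ring_1 mat"
  assumes A: "A \<in> carrier_mat n n"
  shows "\<exists>c. \<forall>t. det (A + t \<cdot>\<^sub>m mat n n (\<lambda>_. 1)) = det A + t * c"
proof (cases "n = 0")
  case True
  with A show ?thesis by (intro exI[of _ 0]) auto
next
  case False
  define J :: "'a mat" where "J = mat n n (\<lambda>_. 1)"
  define E :: "'a mat" where
    "E = mat n n (\<lambda>(i,j). if i = j then 1 else if j = Suc i then -1 else 0)"
  have J: "J \<in> carrier_mat n n" and E: "E \<in> carrier_mat n n"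
    by (auto simp: J_def E_def)
  have "diag_mat E = replicate n 1"
    by (simp add: diag_mat_def E_def list_eq_iff_nth_eq)
  then have det_E: "det E = 1"
    by (subst det_upper_triangular[OF _ E]) (auto simp: E_def upper_triangular_def)
  have EJ_zero: "(E * J) $$ (i,j) = 0" if "i < n" "j < n" "i \<noteq> n - 1" for i j
  proof -
    have "(E * J) $$ (i,j) = (\<Sum>k\<in>{0..<n}. (if i = k then 1 else if k = Suc i then -1 else 0))"
      using that by (simp add: E_def J_def scalar_prod_def row_def col_def)
    also have "\<dots> = (\<Sum>k\<in>{0..<n}. if k = i then 1 else 0) - (\<Sum>k\<in>{0..<n}. if k = Suc i then 1 else 0)"
      by (subst sum_subtractf[symmetric]) (intro sum.cong, auto)
    also have "\<dots> = 0" using that by simp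
    finally show ?thesis .
  qed
  have "det (A + t \<cdot>\<^sub>m J) = det (E * A) + t * (\<Sum>j<n. (E * J) $$ (n-1,j) * cofactor (E * A) (n-1) j)"
    for t
  proof -
    have "det (A + t \<cdot>\<^sub>m J) = det (E * (A + t \<cdot>\<^sub>m J))"
      using det_mult[OF E, of "A + t \<cdot>\<^sub>m J"] A J det_E by simp
    also have "E * (A + t \<cdot>\<^sub>m J) = E * A + t \<cdot>\<^sub>m (E * J)"
      using E A J by (simp add: mult_add_distrib_mat mult_smult_distrib)
    also have "det (E * A + t \<cdot>\<^sub>m (E * J))
        = det (E * A) + t * (\<Sum>j<n. (E * J) $$ (n-1,j) * cofactor (E * A) (n-1) j)"
      using E A J False EJ_zero by (intro det_add_smult_row_supported) auto
    finally show ?thesis .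
  qed
  moreover have "det (E * A) = det A" using det_mult[OF E A] det_E by simp
  ultimately show ?thesis unfolding J_def by auto
qed

lemma det_diag_upper_lower_mat:
  fixes d u l :: "'a :: comm_ring_1"
  shows "(l - u) * det (diag_upper_lower_mat n d u l) = l * (d - u) ^ n - u * (d - l) ^ n"
proof -
  obtain c where c: "\<And>t. det (diag_upper_lower_mat n d u l + t \<cdot>\<^sub>m mat n n (\<lambda>_. 1))
      = det (diag_upper_lower_mat n d u l) + t * c"
    using det_add_smult_all_ones_affine[OF diag_upper_lower_mat_carrier] by blast
  have shift: "diag_upper_lower_mat n d u l + t \<cdot>\<^sub>m mat n n (\<lambda>_. 1)
      = diag_upper_lower_mat n (d + t) (u + t) (l + t)" for t
    by (intro eq_matI) (auto simp: diag_upper_lower_mat_def)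
  have power_u: "(d - u) ^ n = det (diag_upper_lower_mat n d u l) - u * c"
    using c[of "-u"] det_diag_upper_lower_mat_lower_triangular[of n "d - u" "l - u"]
    by (simp add: shift)
  have power_l: "(d - l) ^ n = det (diag_upper_lower_mat n d u l) - l * c"
    using c[of "-l"] det_diag_upper_lower_mat_upper_triangular[of n "d - l" "u - l"]
    by (simp add: shift)
  show ?thesis unfolding power_u power_l by (simp add: algebra_simps)
qed

lemma chi_eq_det_diag_upper_lower_mat:
  fixes \<alpha> :: real
  defines "a \<equiv> complex_of_real (cot \<alpha>)"
  shows "chi \<alpha> n x = det (diag_upper_lower_mat n (x - a) (-(a + \<i>)) (-(a - \<i>)))"
proof -
  have "x \<cdot>\<^sub>m 1\<^sub>m n - C_mat \<alpha> n = diag_upper_lower_mat n (x - a) (-(a + \<i>)) (-(a - \<i>))"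
    by (intro eq_matI) (auto simp: a_def diag_upper_lower_mat_def C_mat_def J_mat_def B_mat_def)
  then show ?thesis
    by (cases "n = 0") (simp_all add: chi_def det_dim_zero[OF diag_upper_lower_mat_carrier])
qed

lemma chi_closed_form:
  fixes \<alpha> :: real
  defines "a \<equiv> complex_of_real (cot \<alpha>)"
  shows "chi \<alpha> n x = ((a + \<i>) * (x - \<i>) ^ n - (a - \<i>) * (x + \<i>) ^ n) / (2 * \<i>)"
  using det_diag_upper_lower_mat[of "-(a - \<i>)" "-(a + \<i>)" n "x - a"]
  by (simp add: chi_eq_det_diag_upper_lower_mat a_def field_simps)

lemma two_power_sum_recurrence:
  fixes A B p q :: "'a :: comm_ring_1"
  shows "A * p ^ Suc (Suc n) + B * q ^ Suc (Suc n)
    = (p + q) * (A * p ^ Suc n + B * q ^ Suc n) - p * q * (A * p ^ n + B * q ^ n)"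
  by (simp add: algebra_simps)

lemma chi_recurrence:
  "chi \<alpha> (Suc (Suc m)) x = 2 * x * chi \<alpha> (Suc m) x - (x\<^sup>2 + 1) * chi \<alpha> m x"
proof -
  define a where "a = complex_of_real (cot \<alpha>)"
  have chi_powers: "chi \<alpha> k x = (a + \<i>) / (2 * \<i>) * (x - \<i>) ^ k + (- (a - \<i>) / (2 * \<i>)) * (x + \<i>) ^ k"
    for k
    by (simp add: chi_closed_form a_def field_simps)
  have sum_eq: "(x - \<i>) + (x + \<i>) = 2 * x" and prod_eq: "(x - \<i>) * (x + \<i>) = x\<^sup>2 + 1"
    by (simp_all add: algebra_simps power2_eq_square)
  have "chi \<alpha> (Suc (Suc m)) x
      = ((x - \<i>) + (x + \<i>)) * chi \<alpha> (Suc m) x - (x - \<i>) * (x + \<i>) * chi \<alpha> m x"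
    unfolding chi_powers by (rule two_power_sum_recurrence)
  then show ?thesis unfolding sum_eq prod_eq .
qed

lemma chi_of_real_eq_Im:
  "chi \<alpha> n (complex_of_real l)
    = complex_of_real (Im ((complex_of_real (cot \<alpha>) + \<i>) * (complex_of_real l - \<i>) ^ n))"
proof -
  let ?z = "(complex_of_real (cot \<alpha>) + \<i>) * (complex_of_real l - \<i>) ^ n"
  have Im_eq: "complex_of_real (Im z) = (z - cnj z) / (2 * \<i>)" for z
    by (simp add: complex_eq_iff)
  have "complex_of_real (Im ?z) = (?z - cnj ?z) / (2 * \<i>)"
    by (rule Im_eq)
  also have "cnj ?z = (complex_of_real (cot \<alpha>) - \<i>) * (complex_of_real l + \<i>) ^ n"
    by simp
  finally show ?thesis by (simp add: chi_closed_form)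
qed

lemma cot_plus_i_eq_cis: "sin t \<noteq> 0 \<Longrightarrow> complex_of_real (cot t) + \<i> = cis t / complex_of_real (sin t)"
  by (simp add: complex_eq_iff cot_def)

lemma cot_minus_i_eq_cis: "sin t \<noteq> 0 \<Longrightarrow> complex_of_real (cot t) - \<i> = cis (-t) / complex_of_real (sin t)"
  by (simp add: complex_eq_iff cot_def)

lemma cot_root:
  assumes "sin \<alpha> \<noteq> 0" "sin t \<noteq> 0" "real n * t = \<alpha> + real k * pi"
  shows "(complex_of_real (cot \<alpha>) + \<i>) * (complex_of_real (cot t) - \<i>) ^ n
    = (complex_of_real (cot \<alpha>) - \<i>) * (complex_of_real (cot t) + \<i>) ^ n"
proof -
  have "cis \<alpha> * cis (- (real n * t)) = cis (-\<alpha>) * cis (real n * t)"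
    by (simp add: cis_mult assms(3) complex_eq_iff)
  then show ?thesis
    using assms(1,2)
    by (simp add: cot_plus_i_eq_cis cot_minus_i_eq_cis power_divide DeMoivre)
qed

lemma sin_shifted_angle_nonzero:
  assumes "\<forall>m::int. \<alpha> \<noteq> of_int m * pi" "n > 0"
  shows "sin ((\<alpha> + real k * pi) / real n) \<noteq> 0"
proof
  assume "sin ((\<alpha> + real k * pi) / real n) = 0"
  then obtain m :: int where "(\<alpha> + real k * pi) / real n = of_int m * pi"
    by (auto simp: sin_zero_iff_int2)
  hence "\<alpha> = of_int (m * int n - int k) * pi" using assms(2) by (simp add: field_simps)
  thus False using assms(1) by blast
qed

lemma cot_eq_imp_diff_int_pi:
  assumes "sin s \<noteq> 0" "sin t \<noteq> 0" "cot s = cot t"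
  shows "\<exists>m::int. t - s = of_int m * pi"
proof -
  have "cos s * sin t - sin s * cos t = 0" using assms by (simp add: cot_def field_simps)
  hence "sin (t - s) = 0" by (simp add: sin_diff mult.commute)
  thus ?thesis by (simp add: sin_zero_iff_int2)
qed

lemma inj_on_cot_shifted_angles:
  assumes "\<forall>m::int. \<alpha> \<noteq> of_int m * pi" "n > 0"
  shows "inj_on (\<lambda>k. cot ((\<alpha> + real k * pi) / real n)) {..<n}"
proof (rule inj_onI)
  fix k k' assume k: "k \<in> {..<n}" and k': "k' \<in> {..<n}"
    and "cot ((\<alpha> + real k * pi) / real n) = cot ((\<alpha> + real k' * pi) / real n)"
  then obtain m :: int
    where "(\<alpha> + real k' * pi) / real n - (\<alpha> + real k * pi) / real n = of_int m * pi"
    using cot_eq_imp_diff_int_pi sin_shifted_angle_nonzero[OF assms] by blast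
  hence "(real k' - real k) * pi / real n = of_int m * pi"
    by (simp add: diff_divide_distrib[symmetric] algebra_simps)
  hence "(real k' - real k) * pi = (of_int m * real n) * pi"
    using assms(2) by (simp add: divide_eq_eq)
  hence "real_of_int (int k' - int k) = real_of_int (m * int n)" by simp
  hence diff: "int k' - int k = m * int n" by (simp only: of_int_eq_iff)
  have "\<bar>int k' - int k\<bar> < int n" using k k' by auto
  moreover have "m \<noteq> 0 \<Longrightarrow> int n \<le> \<bar>m * int n\<bar>"
    by (simp add: abs_mult mult_le_cancel_right1, linarith)
  ultimately have "m = 0" using diff by fastforce
  with diff show "k = k'" by simp
qed

lemma poly_eq_prod_of_distinct_roots:
  fixes p :: "'a :: idom poly"
  assumes "degree p \<le> n" "coeff p n = 1" "inj_on r {..<n}" "\<And>k. k < n \<Longrightarrow> poly p (r k) = 0"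
  shows "p = (\<Prod>k<n. [:- r k, 1:])"
proof (rule poly_eqI_degree_lead_coeff[of p n _ "r ` {..<n}"])
  have degree_prod: "degree (\<Prod>k<n. [:- r k, 1:]) = n"
    by (subst degree_prod_sum_eq) auto
  moreover have "lead_coeff (\<Prod>k<n. [:- r k, 1:]) = 1" by (simp add: lead_coeff_prod)
  ultimately show "coeff p n = coeff (\<Prod>k<n. [:- r k, 1:]) n" using assms(2) by simp
  show "degree (\<Prod>k<n. [:- r k, 1:]) \<le> n" using degree_prod by simp
  show "n \<le> card (r ` {..<n})" using assms(3) by (simp add: card_image)
qed (use assms in \<open>auto simp: poly_prod\<close>)

lemma chi_eq_prod:
  assumes "\<forall>m::int. \<alpha> \<noteq> of_int m * pi" "n > 0"
  shows "chi \<alpha> n x = (\<Prod>k<n. x - complex_of_real (cot ((\<alpha> + real k * pi) / real n)))"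
proof -
  define a where "a = complex_of_real (cot \<alpha>)"
  define r where "r k = complex_of_real (cot ((\<alpha> + real k * pi) / real n))" for k
  define P where
    "P = smult (1 / (2 * \<i>)) (smult (a + \<i>) ([:-\<i>, 1:] ^ n) - smult (a - \<i>) ([:\<i>, 1:] ^ n))"
  have poly_P: "poly P y = chi \<alpha> n y" for y
    by (simp add: P_def chi_closed_form a_def add.commute)
  have sin_\<alpha>: "sin \<alpha> \<noteq> 0" using assms(1) by (auto simp: sin_zero_iff_int2)
  have "P = (\<Prod>k<n. [:- r k, 1:])"
  proof (rule poly_eq_prod_of_distinct_roots)
    show "degree P \<le> n"
      unfolding P_def
      by (intro order.trans[OF degree_smult_le] order.trans[OF degree_diff_le])
         (auto intro: order.trans[OF degree_smult_le] simp: degree_linear_power)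
    show "coeff P n = 1" by (simp add: P_def coeff_linear_power)
    show "inj_on r {..<n}"
      using inj_on_cot_shifted_angles[OF assms] by (simp add: r_def inj_on_def)
    show "poly P (r k) = 0" for k
    proof -
      have "real n * ((\<alpha> + real k * pi) / real n) = \<alpha> + real k * pi" using assms(2) by simp
      then have "(a + \<i>) * (r k - \<i>) ^ n = (a - \<i>) * (r k + \<i>) ^ n"
        unfolding r_def a_def by (rule cot_root[OF sin_\<alpha> sin_shifted_angle_nonzero[OF assms]])
      then show ?thesis by (simp add: poly_P chi_closed_form a_def)
    qed
  qed
  then show ?thesis by (simp flip: poly_P add: poly_prod r_def)
qed

theorem lemma2p1:
  fixes \<alpha> :: real
  assumes "\<forall>m::int. \<alpha> \<noteq> of_int m * pi"
  defines "a \<equiv> complex_of_real (cot \<alpha>)"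
  defines "w \<equiv> a + \<i>"
  shows "(\<forall>n\<ge>2. \<forall>x::complex.
            chi \<alpha> n x = (2*x - 2*a + w + cnj w) * chi \<alpha> (n-1) x
                        - (x - a + w) * (x - a + cnj w) * chi \<alpha> (n-2) x)
       \<and> (\<forall>n\<ge>1. \<forall>l::real.
            chi \<alpha> n (complex_of_real l)
              = ((complex_of_real (cot \<alpha>) + \<i>) * (complex_of_real l - \<i>)^n
                 - (complex_of_real (cot \<alpha>) - \<i>) * (complex_of_real l + \<i>)^n) / (2*\<i>)
          \<and> chi \<alpha> n (complex_of_real l)
              = complex_of_real (Im ((complex_of_real (cot \<alpha>) + \<i>) * (complex_of_real l - \<i>)^n)))
       \<and> (\<forall>n\<ge>1. \<forall>x::complex.
            chi \<alpha> n x = (\<Prod>k<n. x - complex_of_real (cot ((\<alpha> + real k * pi) / real n))))"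
proof (intro conjI allI impI)
  fix n :: nat and x :: complex assume "n \<ge> 2"
  then obtain m where n: "n = Suc (Suc m)" by (metis add_2_eq_Suc le_Suc_ex)
  have "2*x - 2*a + w + cnj w = 2 * x" and "(x - a + w) * (x - a + cnj w) = x\<^sup>2 + 1"
    by (simp_all add: w_def a_def algebra_simps power2_eq_square)
  then show "chi \<alpha> n x = (2*x - 2*a + w + cnj w) * chi \<alpha> (n-1) x
                        - (x - a + w) * (x - a + cnj w) * chi \<alpha> (n-2) x"
    by (simp add: n chi_recurrence)
next
  fix n :: nat and l :: real
  show "chi \<alpha> n (complex_of_real l)
              = ((complex_of_real (cot \<alpha>) + \<i>) * (complex_of_real l - \<i>)^n
                 - (complex_of_real (cot \<alpha>) - \<i>) * (complex_of_real l + \<i>)^n) / (2*\<i>)"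
    by (rule chi_closed_form)
  show "chi \<alpha> n (complex_of_real l)
              = complex_of_real (Im ((complex_of_real (cot \<alpha>) + \<i>) * (complex_of_real l - \<i>)^n))"
    by (rule chi_of_real_eq_Im)
next
  fix n :: nat and x :: complex assume "n \<ge> 1"
  then show "chi \<alpha> n x = (\<Prod>k<n. x - complex_of_real (cot ((\<alpha> + real k * pi) / real n)))"
    using chi_eq_prod[OF assms(1)] by simp
qed

end
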